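(* Let $\Omega$ be a finite search space. Let $S=\{\phi_i\}_{i}$ be a countable set of decomposable probability-of-success metrics and let $\mathcal{D}$ be a probability distribution over $S$. Then the metric $$\phi'(t,f)=\mathbb{E}_{\phi\sim\mathcal{D}}[\phi(t,f)]=\sum_i \mathcal{D}(\phi_i)\,\phi_i(t,f)$$ is also a decomposable probability-of-success metric.
   Context: A probability-of-success metric $\phi$ assigns to each target set $t\subseteq\Omega$ and information resource $f$ a success probability. It is called decomposable if for each $f$ there exists a probability vector $\mathbf{P}_{\phi,f}\in\mathbb{R}^{|\Omega|}$ (nonnegative entries summing to $1$), not a function of $t$, such that $\phi(t,f)=\mathbf{t}^\top\mathbf{P}_{\phi,f}$ for all $t\subseteq\Omega$, where $\mathbf{t}\in\{0,1\}^{|\Omega|}$ is the indicator vector of $t$. *)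

theory Defs
  imports "HOL-Probability.Probability"
begin

text \<open>The search space \<Omega> is the finite type 'w; a target set is t :: 'w set, whose
indicator vector dotted with P is the sum of P over t. A metric maps a target set
and an information resource (of type 'f) to a success probability.\<close>

definition decomposable :: "('w::finite set \<Rightarrow> 'f \<Rightarrow> real) \<Rightarrow> bool" where
  "decomposable \<phi> \<longleftrightarrow>
     (\<forall>f. \<exists>P :: 'w \<Rightarrow> real. (\<forall>w. 0 \<le> P w) \<and> (\<Sum>w\<in>UNIV. P w) = 1 \<and>
          (\<forall>t. \<phi> t f = (\<Sum>w\<in>t. P w)))"

end

theory Submission
  imports Defs
begin

text \<open>A decomposable metric is determined, for each resource f, by a probability vector on
\<Omega>. Choosing such a vector Q \<phi> for every \<phi> in the support of D, the pointwise
expectation of Q \<phi> is again a probability vector, and by linearity of expectation over the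
finite sum defining \<phi> t f it represents the averaged metric.\<close>

definition prob_vector :: "('w::finite \<Rightarrow> real) \<Rightarrow> bool" where
  "prob_vector P \<longleftrightarrow> (\<forall>w. 0 \<le> P w) \<and> (\<Sum>w\<in>UNIV. P w) = 1"

lemma decomposable_iff_prob_vector:
  "decomposable \<phi> \<longleftrightarrow> (\<forall>f. \<exists>P. prob_vector P \<and> (\<forall>t. \<phi> t f = (\<Sum>w\<in>t. P w)))"
  unfolding decomposable_def prob_vector_def by simp

lemma prob_vector_bounded:
  assumes "prob_vector P"
  shows "0 \<le> P w" and "P w \<le> 1"
proof -
  show "0 \<le> P w" using assms by (simp add: prob_vector_def)
  have "P w \<le> (\<Sum>w\<in>UNIV. P w)"
    by (rule member_le_sum) (use assms in \<open>auto simp: prob_vector_def\<close>)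
  then show "P w \<le> 1" using assms by (simp add: prob_vector_def)
qed

lemma integrable_prob_vector_component:
  assumes "\<forall>x\<in>set_pmf D. prob_vector (Q x)"
  shows "integrable (measure_pmf D) (\<lambda>x. Q x w)"
proof (rule measure_pmf.integrable_const_bound[where B = 1])
  have "\<bar>Q x w\<bar> \<le> 1" if "x \<in> set_pmf D" for x
    using prob_vector_bounded[of "Q x" w] assms that by simp
  then show "AE x in measure_pmf D. norm (Q x w) \<le> 1"
    by (simp add: AE_measure_pmf_iff)
qed simp

lemma expectation_sum_prob_vector:
  assumes "\<forall>x\<in>set_pmf D. prob_vector (Q x)"
  shows "measure_pmf.expectation D (\<lambda>x. \<Sum>w\<in>t. Q x w)
       = (\<Sum>w\<in>t. measure_pmf.expectation D (\<lambda>x. Q x w))"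
  by (rule Bochner_Integration.integral_sum) (rule integrable_prob_vector_component[OF assms])

lemma prob_vector_expectation:
  assumes "\<forall>x\<in>set_pmf D. prob_vector (Q x)"
  shows "prob_vector (\<lambda>w. measure_pmf.expectation D (\<lambda>x. Q x w))"
  unfolding prob_vector_def
proof (intro conjI allI)
  fix w
  show "0 \<le> measure_pmf.expectation D (\<lambda>x. Q x w)"
    by (rule integral_nonneg_AE) (use assms prob_vector_bounded in \<open>auto simp: AE_measure_pmf_iff\<close>)
next
  have "(\<Sum>w\<in>UNIV. measure_pmf.expectation D (\<lambda>x. Q x w))
      = measure_pmf.expectation D (\<lambda>x. \<Sum>w\<in>UNIV. Q x w)"
    using expectation_sum_prob_vector[OF assms] by simp
  also have "\<dots> = measure_pmf.expectation D (\<lambda>_. 1)"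
    by (rule integral_cong_AE) (use assms in \<open>auto simp: AE_measure_pmf_iff prob_vector_def\<close>)
  finally show "(\<Sum>w\<in>UNIV. measure_pmf.expectation D (\<lambda>x. Q x w)) = 1"
    by simp
qed

theorem lemma3:
  fixes S :: "('w::finite set \<Rightarrow> 'f \<Rightarrow> real) set"
    and D :: "('w set \<Rightarrow> 'f \<Rightarrow> real) pmf"
  assumes "countable S"
    and "\<forall>\<phi>\<in>S. decomposable \<phi>"
    and "set_pmf D \<subseteq> S"
  shows "decomposable (\<lambda>t f. measure_pmf.expectation D (\<lambda>\<phi>. \<phi> t f))"
  unfolding decomposable_iff_prob_vector
proof
  fix f
  have "\<forall>\<phi>\<in>set_pmf D. \<exists>P. prob_vector P \<and> (\<forall>t. \<phi> t f = (\<Sum>w\<in>t. P w))"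
    using assms(2,3) by (auto simp: decomposable_iff_prob_vector)
  then obtain Q where Q: "\<forall>\<phi>\<in>set_pmf D. prob_vector (Q \<phi>) \<and> (\<forall>t. \<phi> t f = (\<Sum>w\<in>t. Q \<phi> w))"
    by metis
  then have Q_prob: "\<forall>\<phi>\<in>set_pmf D. prob_vector (Q \<phi>)"
    by blast
  have "measure_pmf.expectation D (\<lambda>\<phi>. \<phi> t f)
      = (\<Sum>w\<in>t. measure_pmf.expectation D (\<lambda>\<phi>. Q \<phi> w))" for t
  proof -
    have "measure_pmf.expectation D (\<lambda>\<phi>. \<phi> t f)
        = measure_pmf.expectation D (\<lambda>\<phi>. \<Sum>w\<in>t. Q \<phi> w)"
      by (rule integral_cong_AE) (use Q in \<open>auto simp: AE_measure_pmf_iff\<close>)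
    then show ?thesis
      using expectation_sum_prob_vector[OF Q_prob] by simp
  qed
  with prob_vector_expectation[OF Q_prob]
  show "\<exists>P. prob_vector P \<and> (\<forall>t. measure_pmf.expectation D (\<lambda>\<phi>. \<phi> t f) = (\<Sum>w\<in>t. P w))"
    by blast
qed

end
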